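(* Let $F$ be a commutative field, let $n\ge 1$ and $0\le k\le n-1$, and let $\chi:\Gamma(n,k,F)\to \mathrm{PG}(n,F)^*$ be a linear mapping satisfying the null property: $U\subseteq U^\chi$ for each $U\in\mathbb D(\chi)$. Then $\chi$ is a (generalised) polarity, i.e. for all $k$-subspaces $U_1,U_2$ that are collinear in $\Gamma(n,k,F)$, $U_1\subseteq U_2^\chi$ implies $U_2\subseteq U_1^\chi$, where for an exceptional $U\in\mathbb A(\chi)$ one sets $U^\chi$ to be the whole space $\mathrm{PG}(n,F)$.
   Context: $\mathrm{PG}(n,F)$ is the $n$-dimensional projective space over $F$; a $d$-subspace is a projective subspace of dimension $d$. For subspaces $U\subseteq W$, $[U,W]_d$ is the set of $d$-subspaces $X$ with $U\subseteq X\subseteq W$. The Grassmannian $\Gamma(n,k,F)$ is the semilinear space whose points (G-points) are the $k$-subspaces of $\mathrm{PG}(n,F)$ and whose lines (G-lines) are the pencils $[U,W]_k$ with $\dim U=k-1$, $\dim W=k+1$; two G-points are collinear if some G-line contains both (for $k=0$ this is $\mathrm{PG}(n,F)$ itself). $\mathrm{PG}(n,F)^*$ is the dual projective space (points are hyperplanes, lines are pencils of hyperplanes through an $(n-2)$-subspace). A partial map $\chi$ from a set $\mathcal P$ to $\mathcal P'$ is a map defined on a subset $\mathbb D(\chi)$ (domain); $\mathbb A(\chi)=\mathcal P\setminus\mathbb D(\chi)$ is the exceptional set; for a subset $\phi$, $\phi^\chi=\{X^\chi: X\in\phi\cap\mathbb D(\chi)\}$. A partial map between semilinear spaces is a linear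 mapping if for each line $\ell$ exactly one of the following holds: (i) $\ell^\chi$ is a line and $\chi$ maps $\ell$ bijectively onto $\ell^\chi$; (ii) $\ell^\chi$ is a single point and $|\ell\cap\mathbb A(\chi)|=1$; (iii) $\ell\subseteq\mathbb A(\chi)$. *)

theory Defs
  imports Complex_Main "HOL-Library.Function_Algebras"
begin

text \<open>The underlying vector space of PG(n,F) is F^(n+1), modelled as the
functions v :: nat => F with v i = 0 for i > n. Projective d-subspaces are
linear subspaces of (linear) dimension d+1 of this space.\<close>

definition fsc :: "'a::field \<Rightarrow> (nat \<Rightarrow> 'a) \<Rightarrow> (nat \<Rightarrow> 'a)" where
  "fsc c v = (\<lambda>i. c * v i)"

interpretation fv: vector_space "fsc :: 'a::field \<Rightarrow> (nat \<Rightarrow> 'a) \<Rightarrow> (nat \<Rightarrow> 'a)"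
  by unfold_locales (auto simp: fsc_def algebra_simps fun_eq_iff)

definition ambient :: "nat \<Rightarrow> (nat \<Rightarrow> 'a::field) set" where
  "ambient n = {v. \<forall>i>n. v i = 0}"

text \<open>Projective d-subspace of PG(n,F) (d may be -1 for the empty subspace,
hence the linear dimension dl = d+1 is used as parameter).\<close>
definition lsub :: "nat \<Rightarrow> nat \<Rightarrow> (nat \<Rightarrow> 'a::field) set \<Rightarrow> bool" where
  "lsub n dl U \<longleftrightarrow> fv.subspace U \<and> U \<subseteq> ambient n \<and> fv.dim U = dl"

definition psub :: "nat \<Rightarrow> nat \<Rightarrow> (nat \<Rightarrow> 'a::field) set \<Rightarrow> bool" where
  "psub n d U \<longleftrightarrow> lsub n (d + 1) U"

definition interval :: "nat \<Rightarrow> nat \<Rightarrow> (nat \<Rightarrow> 'a::field) set \<Rightarrow> (nat \<Rightarrow> 'a) set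
    \<Rightarrow> (nat \<Rightarrow> 'a) set set" where
  "interval n d U W = {X. psub n d X \<and> U \<subseteq> X \<and> X \<subseteq> W}"

definition gpoint :: "nat \<Rightarrow> nat \<Rightarrow> (nat \<Rightarrow> 'a::field) set \<Rightarrow> bool" where
  "gpoint n k U \<longleftrightarrow> psub n k U"

definition gline :: "nat \<Rightarrow> nat \<Rightarrow> (nat \<Rightarrow> 'a::field) set set \<Rightarrow> bool" where
  "gline n k L \<longleftrightarrow> (\<exists>U W. lsub n k U \<and> psub n (k + 1) W \<and> U \<subseteq> W \<and> L = interval n k U W)"
  \<comment> \<open>lsub n k U: U is a projective (k-1)-subspace\<close>

definition gcollinear :: "nat \<Rightarrow> nat \<Rightarrow> (nat \<Rightarrow> 'a::field) set \<Rightarrow> (nat \<Rightarrow> 'a) set \<Rightarrow> bool" where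
  "gcollinear n k U1 U2 \<longleftrightarrow> (\<exists>L. gline n k L \<and> U1 \<in> L \<and> U2 \<in> L)"

text \<open>The dual space PG(n,F)^*: points are hyperplanes, lines are pencils of
hyperplanes through an (n-2)-subspace.\<close>
definition dpoint :: "nat \<Rightarrow> (nat \<Rightarrow> 'a::field) set \<Rightarrow> bool" where
  "dpoint n H \<longleftrightarrow> psub n (n - 1) H"

definition dline :: "nat \<Rightarrow> (nat \<Rightarrow> 'a::field) set set \<Rightarrow> bool" where
  "dline n L \<longleftrightarrow> (\<exists>S. lsub n (n - 1) S \<and> L = interval n (n - 1) S (ambient n))"

text \<open>Partial maps are modelled as functions into option: the domain is the set
of G-points with a Some-value, the exceptional set the G-points mapped to None.\<close>
definition pimage :: "('b \<Rightarrow> 'c option) \<Rightarrow> 'b set \<Rightarrow> 'c set" where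
  "pimage chi L = {H. \<exists>X\<in>L. chi X = Some H}"

definition linear_mapping :: "nat \<Rightarrow> nat \<Rightarrow> ((nat \<Rightarrow> 'a::field) set \<Rightarrow> (nat \<Rightarrow> 'a) set option) \<Rightarrow> bool" where
  "linear_mapping n k chi \<longleftrightarrow>
     (\<forall>U. gpoint n k U \<longrightarrow> (\<forall>H. chi U = Some H \<longrightarrow> dpoint n H)) \<and>
     (\<forall>L. gline n k L \<longrightarrow>
        ((dline n (pimage chi L) \<and> (\<forall>X\<in>L. chi X \<noteq> None) \<and>
            inj_on (\<lambda>X. the (chi X)) L)
         \<or> ((\<exists>H. pimage chi L = {H}) \<and> card {X\<in>L. chi X = None} = 1)
         \<or> (\<forall>X\<in>L. chi X = None)))"

definition ext_img :: "nat \<Rightarrow> ((nat \<Rightarrow> 'a::field) set \<Rightarrow> (nat \<Rightarrow> 'a) set option)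
    \<Rightarrow> (nat \<Rightarrow> 'a) set \<Rightarrow> (nat \<Rightarrow> 'a) set" where
  "ext_img n chi U = (case chi U of Some H \<Rightarrow> H | None \<Rightarrow> ambient n)"

end

theory Submission imports Defs begin

text \<open>Let \<open>U\<^sub>1 \<noteq> U\<^sub>2\<close> lie on the G-line \<open>[S,W]\<^sub>k\<close>, with \<open>U\<^sub>1\<^sup>\<chi> = H\<^sub>1\<close>, and choose a third point
\<open>X\<close> on it; we show \<open>W \<subseteq> H\<^sub>1\<close>. If \<open>\<chi>\<close> is bijective on the line, the images \<open>H\<^sub>1, H\<^sub>2, H\<^sub>3\<close>
of \<open>U\<^sub>1, U\<^sub>2, X\<close> are distinct hyperplanes of a pencil, so any two of them meet in its axis.
Since \<open>U\<^sub>1 \<subseteq> H\<^sub>1 \<inter> H\<^sub>2\<close>, also \<open>U\<^sub>1 \<subseteq> H\<^sub>3\<close>; as \<open>X \<subseteq> H\<^sub>3\<close>, the subspace \<open>H\<^sub>3\<close> contains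
\<open>U\<^sub>1 + X = W\<close>. Likewise \<open>W = U\<^sub>1 + U\<^sub>2 \<subseteq> H\<^sub>2\<close>, hence \<open>W \<subseteq> H\<^sub>2 \<inter> H\<^sub>3 \<subseteq> H\<^sub>1\<close>. If the line has
a single image \<open>H\<close> and one exceptional point, two points of the line lie in \<open>H = H\<^sub>1\<close>
by the null property, so again \<open>W \<subseteq> H\<^sub>1\<close>.\<close>

lemma sum_fun_apply: "finite A \<Longrightarrow> (\<Sum>i\<in>A. f i) x = (\<Sum>i\<in>A. f i x)"
  by (induction A rule: finite_induct) auto

definition unit_vec :: "nat \<Rightarrow> nat \<Rightarrow> 'a::field" where
  "unit_vec i = (\<lambda>j. if j = i then 1 else 0)"

lemma ambient_subset_span_unit_vecs:
  "ambient n \<subseteq> fv.span (unit_vec ` {..n} :: (nat \<Rightarrow> 'a::field) set)"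
proof
  fix v :: "nat \<Rightarrow> 'a" assume v: "v \<in> ambient n"
  have "v = (\<Sum>i\<in>{..n}. fsc (v i) (unit_vec i))"
  proof
    fix j
    have "(\<Sum>i\<in>{..n}. fsc (v i) (unit_vec i)) j = (\<Sum>i\<in>{..n}. v i * (if j = i then 1 else 0))"
      by (simp add: sum_fun_apply fsc_def unit_vec_def)
    also have "\<dots> = (if j \<le> n then v j else 0)"
      by (simp add: if_distrib[of "\<lambda>x. v _ * x"] sum.delta' cong: if_cong)
    also have "\<dots> = v j" using v by (auto simp: ambient_def)
    finally show "v j = (\<Sum>i\<in>{..n}. fsc (v i) (unit_vec i)) j" by simp
  qed
  also have "\<dots> \<in> fv.span (unit_vec ` {..n})"
    by (intro fv.span_sum fv.span_scale fv.span_base) auto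
  finally show "v \<in> fv.span (unit_vec ` {..n})" .
qed

lemma independent_in_ambient_finite:
  "fv.independent B \<Longrightarrow> B \<subseteq> ambient n \<Longrightarrow> finite (B :: (nat \<Rightarrow> 'a::field) set)"
  using fv.independent_span_bound[of "unit_vec ` {..n}" B] ambient_subset_span_unit_vecs[of n]
  by auto

lemma dim_subset_ambient:
  fixes A C :: "(nat \<Rightarrow> 'a::field) set"
  assumes "fv.subspace A" "fv.subspace C" "A \<subseteq> C" "C \<subseteq> ambient n"
  shows "fv.dim A \<le> fv.dim C" and "A \<noteq> C \<Longrightarrow> fv.dim A < fv.dim C"
proof -
  obtain BA where BA: "BA \<subseteq> A" "fv.independent BA" "A \<subseteq> fv.span BA" "card BA = fv.dim A"
    using fv.basis_exists by blast
  obtain B where B: "BA \<subseteq> B" "B \<subseteq> C" "fv.independent B" "C \<subseteq> fv.span B"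
    using fv.maximal_independent_subset_extend[of BA C] BA assms by blast
  have dimC: "card B = fv.dim C" using fv.basis_card_eq_dim B by blast
  have "finite B" using independent_in_ambient_finite B assms by blast
  then show "fv.dim A \<le> fv.dim C" using B BA dimC card_mono by metis
  assume "A \<noteq> C"
  have "BA \<noteq> B"
  proof
    assume "BA = B"
    then have "C \<subseteq> A" using B BA fv.span_minimal[of BA A] assms(1) by blast
    with \<open>A \<noteq> C\<close> assms(3) show False by blast
  qed
  then have "BA \<subset> B" using B(1) by blast
  then have "card BA < card B" by (rule psubset_card_mono[OF \<open>finite B\<close>])
  with BA(4) dimC show "fv.dim A < fv.dim C" by simp
qed

lemma psub_subset_imp_eq:
  "psub n d X \<Longrightarrow> psub n d Y \<Longrightarrow> X \<subseteq> Y \<Longrightarrow> X = Y"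
  using dim_subset_ambient(2)[of X Y n] by (fastforce simp: psub_def lsub_def)

lemma dim_span_insert_le:
  fixes S :: "(nat \<Rightarrow> 'a::field) set"
  assumes "S \<subseteq> ambient n"
  shows "fv.dim (fv.span (insert x S)) \<le> fv.dim S + 1"
proof -
  obtain B where B: "B \<subseteq> S" "fv.independent B" "S \<subseteq> fv.span B" "card B = fv.dim S"
    using fv.basis_exists by blast
  have "finite B" using independent_in_ambient_finite B assms by blast
  have "insert x S \<subseteq> fv.span (insert x B)"
    using B fv.span_mono[of B "insert x B"] fv.span_base[of x "insert x B"] by auto
  then have "fv.span (insert x S) \<subseteq> fv.span (insert x B)"
    using fv.span_minimal fv.subspace_span by blast
  then have "fv.dim (fv.span (insert x S)) \<le> card (insert x B)"
    using fv.dim_le_card \<open>finite B\<close> by blast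
  also have "\<dots> \<le> card B + 1" using \<open>finite B\<close> by (simp add: card_insert_if)
  finally show ?thesis using B by simp
qed

lemma psub_inter_eq:
  assumes H: "psub n d H" and H': "psub n d H'" and "H \<noteq> H'"
    and S: "lsub n d S" and "S \<subseteq> H" and "S \<subseteq> H'"
  shows "H \<inter> H' = S"
proof -
  have h: "fv.subspace H" "H \<subseteq> ambient n" "fv.dim H = d + 1"
    using H by (auto simp: psub_def lsub_def)
  have h': "fv.subspace H'" using H' by (auto simp: psub_def lsub_def)
  have s: "fv.subspace S" "fv.dim S = d" using S by (auto simp: lsub_def)
  have i: "fv.subspace (H \<inter> H')" using h h' fv.subspace_inter by blast
  have "H \<inter> H' \<noteq> H" using psub_subset_imp_eq[OF H H'] \<open>H \<noteq> H'\<close> by blast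
  then have "fv.dim (H \<inter> H') \<le> fv.dim S"
    using dim_subset_ambient(2)[of "H \<inter> H'" H n] i h s by auto
  then show ?thesis
    using dim_subset_ambient(2)[of S "H \<inter> H'" n] s i h assms(5,6) by fastforce
qed

lemma two_hyperplanes_generate:
  assumes X: "psub n k X" and Y: "psub n k Y" and "X \<noteq> Y"
    and "X \<subseteq> W" "Y \<subseteq> W" and W: "psub n (k + 1) W"
    and T: "fv.subspace T" and "X \<subseteq> T" "Y \<subseteq> T"
  shows "W \<subseteq> T"
proof -
  have w: "fv.subspace W" "W \<subseteq> ambient n" "fv.dim W = k + 2"
    using W by (auto simp: psub_def lsub_def)
  have x: "fv.subspace X" "fv.dim X = k + 1" using X by (auto simp: psub_def lsub_def)
  define Z where "Z = W \<inter> T"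
  have z: "fv.subspace Z" "Z \<subseteq> W" "Z \<subseteq> ambient n"
    using w T fv.subspace_inter unfolding Z_def by auto
  have XZ: "X \<subseteq> Z" and YZ: "Y \<subseteq> Z"
    using \<open>X \<subseteq> W\<close> \<open>Y \<subseteq> W\<close> \<open>X \<subseteq> T\<close> \<open>Y \<subseteq> T\<close> unfolding Z_def by auto
  have "X \<noteq> Z"
  proof
    assume "X = Z"
    then have "psub n k Z" using X by simp
    then have "Y = Z" using psub_subset_imp_eq[OF Y _ YZ] by simp
    with \<open>X = Z\<close> \<open>X \<noteq> Y\<close> show False by simp
  qed
  then have "k + 1 < fv.dim Z" using dim_subset_ambient(2)[OF x(1) z(1) XZ z(3)] x(2) by simp
  then have "\<not> fv.dim Z < fv.dim W" using w(3) by simp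
  then have "Z = W" using dim_subset_ambient(2)[OF z(1) w(1) z(2) w(2)] by blast
  then show ?thesis unfolding Z_def by auto
qed

text \<open>Given \<open>u \<in> U\<^sub>1 - U\<^sub>2\<close> and \<open>v \<in> U\<^sub>2 - U\<^sub>1\<close>, the third point is \<open>S + \<langle>u + v\<rangle>\<close>.\<close>

lemma interval_third_point:
  assumes S: "lsub n k S" and W: "psub n (k + 1) W"
    and U1: "U1 \<in> interval n k S W" and U2: "U2 \<in> interval n k S W" and "U1 \<noteq> U2"
  obtains X where "X \<in> interval n k S W" "X \<noteq> U1" "X \<noteq> U2"
proof -
  have s: "fv.subspace S" "S \<subseteq> ambient n" "fv.dim S = k" using S by (auto simp: lsub_def)
  have w: "fv.subspace W" "W \<subseteq> ambient n" using W by (auto simp: psub_def lsub_def)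
  have u1: "psub n k U1" "fv.subspace U1" "U1 \<subseteq> W"
    using U1 by (auto simp: interval_def psub_def lsub_def)
  have u2: "psub n k U2" "fv.subspace U2" "S \<subseteq> U2" "U2 \<subseteq> W"
    using U2 by (auto simp: interval_def psub_def lsub_def)
  obtain u where u: "u \<in> U1" "u \<notin> U2"
    using psub_subset_imp_eq[OF u1(1) u2(1)] \<open>U1 \<noteq> U2\<close> by blast
  obtain v where v: "v \<in> U2" "v \<notin> U1"
    using psub_subset_imp_eq[OF u2(1) u1(1)] \<open>U1 \<noteq> U2\<close> by blast
  have "u + v \<notin> U1" using fv.subspace_diff[OF u1(2), of "u + v" u] u v by auto
  have "u + v \<notin> U2" using fv.subspace_diff[OF u2(2), of "u + v" v] u v by auto
  define X where "X = fv.span (insert (u + v) S)"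
  have "u + v \<in> X" unfolding X_def by (rule fv.span_base) simp
  have x: "fv.subspace X" "S \<subseteq> X" unfolding X_def by (auto intro: fv.span_base)
  have "u + v \<in> W" using fv.subspace_add[OF w(1)] u(1) v(1) u1(3) u2(4) by blast
  then have "X \<subseteq> W" unfolding X_def
    using fv.span_minimal[OF _ w(1)] u2(3,4) by blast
  have "S \<noteq> X" using \<open>u + v \<in> X\<close> \<open>u + v \<notin> U2\<close> u2(3) by blast
  then have "k < fv.dim X"
    using dim_subset_ambient(2)[OF s(1) x \<open>X \<subseteq> W\<close>[THEN order_trans, OF w(2)]] s(3) by simp
  moreover have "fv.dim X \<le> k + 1" using dim_span_insert_le[OF s(2)] s(3) X_def by simp
  ultimately have "X \<in> interval n k S W"
    using x \<open>X \<subseteq> W\<close> w(2) by (auto simp: interval_def psub_def lsub_def)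
  moreover have "X \<noteq> U1" "X \<noteq> U2"
    using \<open>u + v \<in> X\<close> \<open>u + v \<notin> U1\<close> \<open>u + v \<notin> U2\<close> by auto
  ultimately show thesis using that by blast
qed

lemma pencil_images_absorb_line:
  assumes U1: "psub n k U1" and U2: "psub n k U2" and X: "psub n k X"
    and "U1 \<noteq> U2" "U1 \<noteq> X" and "U1 \<subseteq> W" "U2 \<subseteq> W" "X \<subseteq> W" and W: "psub n (k + 1) W"
    and S: "lsub n (n - 1) S" and P: "{H1, H2, H3} \<subseteq> interval n (n - 1) S (ambient n)"
    and "H1 \<noteq> H2" "H2 \<noteq> H3"
    and "U1 \<subseteq> H1" "U2 \<subseteq> H2" "X \<subseteq> H3" "U1 \<subseteq> H2"
  shows "W \<subseteq> H1"
proof -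
  have H: "psub n (n - 1) H1" "psub n (n - 1) H2" "psub n (n - 1) H3"
    "S \<subseteq> H1" "S \<subseteq> H2" "S \<subseteq> H3"
    using P by (auto simp: interval_def)
  then have "fv.subspace H2" "fv.subspace H3" by (auto simp: psub_def lsub_def)
  have axis12: "H1 \<inter> H2 = S" by (rule psub_inter_eq[OF H(1,2) \<open>H1 \<noteq> H2\<close> S H(4,5)])
  have axis23: "H2 \<inter> H3 = S" by (rule psub_inter_eq[OF H(2,3) \<open>H2 \<noteq> H3\<close> S H(5,6)])
  have "U1 \<subseteq> H3" using \<open>U1 \<subseteq> H1\<close> \<open>U1 \<subseteq> H2\<close> axis12 H(6) by blast
  have "W \<subseteq> H3"
    by (rule two_hyperplanes_generate[OF U1 X \<open>U1 \<noteq> X\<close> \<open>U1 \<subseteq> W\<close> \<open>X \<subseteq> W\<close> W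
          \<open>fv.subspace H3\<close> \<open>U1 \<subseteq> H3\<close> \<open>X \<subseteq> H3\<close>])
  moreover have "W \<subseteq> H2"
    by (rule two_hyperplanes_generate[OF U1 U2 \<open>U1 \<noteq> U2\<close> \<open>U1 \<subseteq> W\<close> \<open>U2 \<subseteq> W\<close> W
          \<open>fv.subspace H2\<close> \<open>U1 \<subseteq> H2\<close> \<open>U2 \<subseteq> H2\<close>])
  ultimately show ?thesis using axis23 H(4) by blast
qed

lemma linear_mapping_gline_cases:
  assumes "linear_mapping n k chi" "gline n k L"
  obtains (bijective) S where "lsub n (n - 1) S" "pimage chi L = interval n (n - 1) S (ambient n)"
      "\<forall>X\<in>L. chi X \<noteq> None" "inj_on (\<lambda>X. the (chi X)) L"
    | (collapsed) H Y where "pimage chi L = {H}" "{X\<in>L. chi X = None} = {Y}"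
    | (exceptional) "\<forall>X\<in>L. chi X = None"
proof -
  have "(dline n (pimage chi L) \<and> (\<forall>X\<in>L. chi X \<noteq> None) \<and> inj_on (\<lambda>X. the (chi X)) L)
      \<or> ((\<exists>H. pimage chi L = {H}) \<and> card {X\<in>L. chi X = None} = 1)
      \<or> (\<forall>X\<in>L. chi X = None)"
    using assms unfolding linear_mapping_def by blast
  then show thesis
  proof (elim disjE conjE exE)
    assume "dline n (pimage chi L)" "\<forall>X\<in>L. chi X \<noteq> None" "inj_on (\<lambda>X. the (chi X)) L"
    then show thesis using bijective unfolding dline_def by blast
  next
    fix H assume "pimage chi L = {H}" "card {X\<in>L. chi X = None} = 1"
    then show thesis using collapsed by (metis card_1_singletonE)
  qed (rule exceptional)
qed

lemma linear_mapping_image_subspace: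
  "linear_mapping n k chi \<Longrightarrow> gpoint n k U \<Longrightarrow> chi U = Some H \<Longrightarrow> fv.subspace H"
  unfolding linear_mapping_def dpoint_def psub_def lsub_def by blast

lemma null_linear_mapping_symmetric_on_gline:
  assumes lin: "linear_mapping n k chi"
    and null: "\<And>U H. gpoint n k U \<Longrightarrow> chi U = Some H \<Longrightarrow> U \<subseteq> H"
    and L: "gline n k L" and U1: "U1 \<in> L" and U2: "U2 \<in> L" and "U1 \<noteq> U2"
    and H1: "chi U1 = Some H1" and hyp: "U1 \<subseteq> ext_img n chi U2"
  shows "U2 \<subseteq> H1"
proof -
  from L obtain S W where S: "lsub n k S" and W: "psub n (k + 1) W"
    and L_def: "L = interval n k S W" unfolding gline_def by blast
  obtain X where X: "X \<in> L" and "X \<noteq> U1" "X \<noteq> U2"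
    using interval_third_point[OF S W] U1 U2 \<open>U1 \<noteq> U2\<close> unfolding L_def by blast
  have psub_L: "psub n k Y" and sub_W: "Y \<subseteq> W" if "Y \<in> L" for Y
    using that unfolding L_def interval_def by simp_all
  have null_L: "Y \<subseteq> H" if "Y \<in> L" "chi Y = Some H" for Y H
    using null[of Y H] psub_L[OF that(1)] that(2) unfolding gpoint_def by blast
  have img: "H \<in> pimage chi L" if "Y \<in> L" "chi Y = Some H" for Y H
    using that unfolding pimage_def by blast
  have "W \<subseteq> H1"
  proof (rule linear_mapping_gline_cases[OF lin L])
    fix S' assume S': "lsub n (n - 1) S'" and P: "pimage chi L = interval n (n - 1) S' (ambient n)"
      and defined: "\<forall>X\<in>L. chi X \<noteq> None" and inj: "inj_on (\<lambda>X. the (chi X)) L"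
    obtain H2 H3 where H2: "chi U2 = Some H2" and H3: "chi X = Some H3"
      using defined U2 X by blast
    have "H1 \<noteq> H2"
      using inj_onD[OF inj _ U1 U2] H1 H2 \<open>U1 \<noteq> U2\<close> by auto
    have "H2 \<noteq> H3"
      using inj_onD[OF inj _ U2 X] H2 H3 \<open>X \<noteq> U2\<close> by auto
    have pencil: "{H1, H2, H3} \<subseteq> interval n (n - 1) S' (ambient n)"
      using img[OF U1 H1] img[OF U2 H2] img[OF X H3] P by simp
    have "U1 \<subseteq> H2" using hyp H2 by (simp add: ext_img_def)
    show ?thesis
      by (rule pencil_images_absorb_line[OF psub_L[OF U1] psub_L[OF U2] psub_L[OF X] \<open>U1 \<noteq> U2\<close>
            \<open>X \<noteq> U1\<close>[symmetric] sub_W[OF U1] sub_W[OF U2] sub_W[OF X] W S' pencil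
            \<open>H1 \<noteq> H2\<close> \<open>H2 \<noteq> H3\<close> null_L[OF U1 H1] null_L[OF U2 H2] null_L[OF X H3]
            \<open>U1 \<subseteq> H2\<close>])
  next
    fix H Y assume image: "pimage chi L = {H}" and exceptional: "{X\<in>L. chi X = None} = {Y}"
    \<comment> \<open>of the two points \<open>U\<^sub>2, X \<noteq> U\<^sub>1\<close>, at most one is exceptional\<close>
    obtain Z H' where Z: "Z \<in> L" "Z \<noteq> U1" and H': "chi Z = Some H'"
    proof (cases "chi U2")
      case (Some H2)
      show thesis by (rule that[OF U2 \<open>U1 \<noteq> U2\<close>[symmetric] Some])
    next
      case None
      have "X \<in> {X\<in>L. chi X = None} \<Longrightarrow> X = U2"
        using exceptional U2 None by auto
      then obtain H3 where "chi X = Some H3" using X \<open>X \<noteq> U2\<close> by fastforce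
      then show thesis by (rule that[OF X \<open>X \<noteq> U1\<close>])
    qed
    have "H' = H1" using img[OF U1 H1] img[OF Z(1) H'] image by simp
    then have "Z \<subseteq> H1" using null_L[OF Z(1) H'] by simp
    have "fv.subspace H1"
      using linear_mapping_image_subspace[OF lin _ H1] psub_L[OF U1] unfolding gpoint_def by blast
    show ?thesis
      by (rule two_hyperplanes_generate[OF psub_L[OF U1] psub_L[OF Z(1)] Z(2)[symmetric] sub_W[OF U1]
            sub_W[OF Z(1)] W \<open>fv.subspace H1\<close> null_L[OF U1 H1] \<open>Z \<subseteq> H1\<close>])
  next
    assume "\<forall>X\<in>L. chi X = None"
    then show ?thesis using U1 H1 by simp
  qed
  then show ?thesis using sub_W[OF U2] by blast
qed

theorem theorem5p1:
  fixes n k :: nat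
    and chi :: "(nat \<Rightarrow> 'a::field) set \<Rightarrow> (nat \<Rightarrow> 'a) set option"
  assumes "n \<ge> 1" and "k \<le> n - 1"
    and "linear_mapping n k chi"
    and null: "\<And>U H. gpoint n k U \<Longrightarrow> chi U = Some H \<Longrightarrow> U \<subseteq> H"
  shows "\<forall>U1 U2. gpoint n k U1 \<and> gpoint n k U2 \<and> gcollinear n k U1 U2 \<longrightarrow>
           U1 \<subseteq> ext_img n chi U2 \<longrightarrow> U2 \<subseteq> ext_img n chi U1"
proof (intro allI impI, elim conjE)
  fix U1 U2 :: "(nat \<Rightarrow> 'a) set"
  assume "gpoint n k U1" "gpoint n k U2" "gcollinear n k U1 U2"
    and hyp: "U1 \<subseteq> ext_img n chi U2"
  show "U2 \<subseteq> ext_img n chi U1"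
  proof (cases "chi U1")
    case None
    then show ?thesis using \<open>gpoint n k U2\<close> by (auto simp: ext_img_def gpoint_def psub_def lsub_def)
  next
    case (Some H1)
    obtain L where "gline n k L" "U1 \<in> L" "U2 \<in> L"
      using \<open>gcollinear n k U1 U2\<close> unfolding gcollinear_def by blast
    then have "U1 = U2 \<or> U2 \<subseteq> H1"
      using null_linear_mapping_symmetric_on_gline[OF assms(3) null _ _ _ _ Some hyp] by blast
    then show ?thesis using hyp Some by (auto simp: ext_img_def)
  qed
qed

end
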